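(* $\alpha^*=\overline{\alpha}$ if and only if $m\le 2d-2$ and $p_0=p_i$ for some $i\in\{m-d+1,\dots,d-1\}$.
   Context: Fix integers $d\ge 3$ and $m\ge d$ and a probability vector $\mathbf p=(p_0,\dots,p_m)$ with all $p_i>0$ which is regular, normalized so that $p_0\le p_m\le p_i$ for all $1\le i\le m-1$. Let $\mathcal A=\{0,\dots,m\}$, $\mathcal A^*$ the set of finite words, $|\sigma|$ the length and $\sigma_j$ the $j$-th letter of $\sigma$. Put $\delta=-1/\log d$. Let $a=1+\lfloor (m-d)/(d-1)\rfloor$, set $p_j=0$ for $j\notin\mathcal A$, and let $M_i$ ($i\in\mathcal A$) be the $(2a+1)\times(2a+1)$ matrix indexed by $\{-a,\dots,a\}^2$ with $M_i(k,l)=p_{k+i-ld}$; $M(\sigma)=M_{\sigma_k}\cdots M_{\sigma_1}$ for $\sigma$ of length $k$; $\rho$ is spectral radius. Set $\alpha^*=\delta\log\inf\{\rho(M(\sigma))^{1/|\sigma|}:\sigma\in\mathcal A^*,\ \sigma_1\notin\{0,m\}\}$ and $\overline{\alpha}=\delta\log p_0$. (By the paper's Theorem 1, $\alpha^*$ is also the minimal number such that every local dimension of $\mu$, the self-similar measure with $\mu(A)=\sum_i p_i\mu(dA-i)$, lies in $[\inf\Delta\mu,\alpha^*]\cup\{\delta\log p_m,\overline\alpha\}$.) *)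

theory Defs
  imports Complex_Main "Jordan_Normal_Form.Spectral_Radius"
begin

definition pext :: "nat \<Rightarrow> (nat \<Rightarrow> real) \<Rightarrow> int \<Rightarrow> real" where
  "pext m p j = (if 0 \<le> j \<and> j \<le> int m then p (nat j) else 0)"

definition aconst :: "nat \<Rightarrow> nat \<Rightarrow> nat" where
  "aconst d m = 1 + (m - d) div (d - 1)"

text \<open>The (2a+1)x(2a+1) matrix M_i; row/column r in {0..2a} corresponds to index r - a in {-a..a}.
  Entry (k,l) is p_{k+i-l d}.\<close>
definition Mi :: "nat \<Rightarrow> nat \<Rightarrow> (nat \<Rightarrow> real) \<Rightarrow> nat \<Rightarrow> complex mat" where
  "Mi d m p i = (let a = aconst d m in
     mat (2*a+1) (2*a+1) (\<lambda>(r, c). complex_of_real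
        (pext m p ((int r - int a) + int i - (int c - int a) * int d))))"

fun Mword :: "nat \<Rightarrow> nat \<Rightarrow> (nat \<Rightarrow> real) \<Rightarrow> nat list \<Rightarrow> complex mat" where
  "Mword d m p [] = 1\<^sub>m (2 * aconst d m + 1)"
| "Mword d m p (x # xs) = Mword d m p xs * Mi d m p x"

definition alpha_star :: "nat \<Rightarrow> nat \<Rightarrow> (nat \<Rightarrow> real) \<Rightarrow> real" where
  "alpha_star d m p = (- 1 / ln (real d)) *
     ln (Inf {spectral_radius (Mword d m p \<sigma>) powr (1 / real (length \<sigma>)) | \<sigma>.
              \<sigma> \<noteq> [] \<and> set \<sigma> \<subseteq> {0..m} \<and> hd \<sigma> \<notin> {0, m}})"

definition alpha_bar :: "nat \<Rightarrow> (nat \<Rightarrow> real) \<Rightarrow> real" where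
  "alpha_bar d p = (- 1 / ln (real d)) * ln (p 0)"

end

theory Submission
  imports Defs
begin

text \<open>
  All \<open>M\<^sub>j\<close> are nonnegative with \<open>M\<^sub>j(0, 0) = p\<^sub>j \<ge> p\<^sub>0\<close>, so \<open>\<rho>(M(\<sigma>)) \<ge> p\<^sub>0 ^ |\<sigma>|\<close>, and
  \<open>alpha_star = alpha_bar\<close> says exactly that the infimum of \<open>\<rho>(M(\<sigma>)) ^ (1 / |\<sigma>|)\<close> is \<open>p\<^sub>0\<close>.
  If \<open>m \<le> 2d - 2\<close> then \<open>a = 1\<close>, and for \<open>m - d < i < d\<close> with \<open>p\<^sub>i = p\<^sub>0\<close> the \<open>3 \<times> 3\<close> matrix
  \<open>M\<^sub>i\<close> has middle row \<open>(0, p\<^sub>0, 0)\<close> and vanishing corners, so its eigenvalues are its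
  diagonal entries, all at most \<open>p\<^sub>0\<close>: the word \<open>\<sigma> = i\<close> attains the infimum.
  Otherwise there are a weight vector \<open>w\<close> and \<open>g > p\<^sub>0\<close> with \<open>M\<^sub>j w \<ge> g w\<close> for every \<open>j\<close>,
  which gives \<open>\<rho>(M(\<sigma>)) \<ge> g ^ |\<sigma>|\<close>: for \<open>m \<ge> 2d - 1\<close> every row of every \<open>M\<^sub>j\<close> has two
  entries \<open>\<ge> p\<^sub>0\<close>, so \<open>w = (1, \<dots>, 1)\<close> and \<open>g = 2p\<^sub>0\<close> work; for \<open>m \<le> 2d - 2\<close> the weight
  \<open>w = (1, 2, 1)\<close> gives strict inequalities in all rows, and as there are finitely many of
  them some \<open>g > p\<^sub>0\<close> satisfies them all.
\<close>

lemma smult_smult_mat: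
  fixes A :: "'a :: comm_ring_1 mat"
  shows "a \<cdot>\<^sub>m (b \<cdot>\<^sub>m A) = (a * b) \<cdot>\<^sub>m A"
  by (intro eq_matI) (auto simp: ac_simps)

lemma smult_one_mat:
  fixes A :: "'a :: comm_ring_1 mat"
  shows "1 \<cdot>\<^sub>m A = A"
  by (intro eq_matI) auto

lemma pow_mat_smult:
  fixes A :: "'a :: comm_ring_1 mat"
  assumes A: "A \<in> carrier_mat n n"
  shows "(c \<cdot>\<^sub>m A) ^\<^sub>m k = c ^ k \<cdot>\<^sub>m A ^\<^sub>m k"
proof (induction k)
  case 0
  show ?case using A by (auto intro!: eq_matI)
next
  case (Suc k)
  have "(c \<cdot>\<^sub>m A) ^\<^sub>m Suc k = (c ^ k \<cdot>\<^sub>m A ^\<^sub>m k) * (c \<cdot>\<^sub>m A)"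
    using Suc by simp
  also have "\<dots> = c ^ k \<cdot>\<^sub>m (A ^\<^sub>m k * (c \<cdot>\<^sub>m A))"
    using A by (intro mult_smult_assoc_mat) auto
  also have "\<dots> = c ^ k \<cdot>\<^sub>m (c \<cdot>\<^sub>m (A ^\<^sub>m k * A))"
    using A by (subst mult_smult_distrib) auto
  finally show ?case by (simp add: smult_smult_mat ac_simps)
qed

lemma smult_mat_mult_vec:
  assumes "dim_col A = dim_vec u"
  shows "(c \<cdot>\<^sub>m A) *\<^sub>v u = c \<cdot>\<^sub>v (A *\<^sub>v u)"
  using assms
  by (intro eq_vecI) (auto simp: scalar_prod_def sum_distrib_left ac_simps intro!: sum.cong)

lemma index_mult_mat_vec_sum:
  assumes "i < dim_row A" "dim_col A = dim_vec u"
  shows "(A *\<^sub>v u) $ i = (\<Sum>j<dim_vec u. A $$ (i, j) * u $ j)"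
  using assms by (auto simp: scalar_prod_def lessThan_atLeast0 intro!: sum.cong)

lemma norm_index_mult_mat_vec_le:
  fixes A :: "complex mat"
  assumes "norm_bound A c" "A \<in> carrier_mat nr n" "u \<in> carrier_vec n" "i < nr"
  shows "norm ((A *\<^sub>v u) $ i) \<le> c * (\<Sum>j<n. norm (u $ j))"
proof -
  have "(A *\<^sub>v u) $ i = (\<Sum>j<n. A $$ (i, j) * u $ j)"
    using assms(2-4) by (subst index_mult_mat_vec_sum) auto
  then have "norm ((A *\<^sub>v u) $ i) \<le> (\<Sum>j<n. norm (A $$ (i, j)) * norm (u $ j))"
    by (simp add: norm_sum norm_mult[symmetric])
  also have "\<dots> \<le> (\<Sum>j<n. c * norm (u $ j))"
    using assms unfolding norm_bound_def by (intro sum_mono mult_right_mono) auto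
  finally show ?thesis by (simp add: sum_distrib_left)
qed

lemma eigenvalue_smult:
  fixes A :: "'a :: field mat"
  assumes "A \<in> carrier_mat n n" "eigenvalue A e"
  shows "eigenvalue (c \<cdot>\<^sub>m A) (c * e)"
  using assms unfolding eigenvalue_def eigenvector_def
  by (auto simp: smult_mat_mult_vec smult_smult_assoc)

lemma spectral_radius_smult_le:
  assumes A: "A \<in> carrier_mat n n" and n: "n > 0" and c: "c \<noteq> 0"
  shows "spectral_radius (c \<cdot>\<^sub>m A) \<le> norm c * spectral_radius A"
proof -
  have cA: "c \<cdot>\<^sub>m A \<in> carrier_mat n n" using A by simp
  obtain e where e: "eigenvalue (c \<cdot>\<^sub>m A) e" "spectral_radius (c \<cdot>\<^sub>m A) = norm e"
    using spectral_radius_mem_max(1)[OF cA n] unfolding spectrum_def by auto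
  have "eigenvalue (inverse c \<cdot>\<^sub>m (c \<cdot>\<^sub>m A)) (inverse c * e)"
    using eigenvalue_smult[OF cA e(1)] .
  moreover have "inverse c \<cdot>\<^sub>m (c \<cdot>\<^sub>m A) = A"
    using c by (simp add: smult_smult_mat smult_one_mat)
  ultimately have "norm (inverse c * e) \<le> spectral_radius A"
    using spectral_radius_mem_max(2)[OF A n] unfolding spectrum_def by auto
  then have "norm e / norm c \<le> spectral_radius A"
    by (simp add: norm_mult norm_inverse divide_inverse mult.commute)
  then show ?thesis
    using c e(2) by (simp add: pos_divide_le_eq mult.commute)
qed

lemma spectral_radius_nonneg:
  assumes "A \<in> carrier_mat n n" "n > 0"
  shows "0 \<le> spectral_radius A"
proof -
  obtain e :: complex where "spectral_radius A = norm e"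
    using spectral_radius_mem_max(1)[OF assms] by blast
  then show ?thesis by simp
qed

lemma bounded_growth_if_spectral_radius_less:
  fixes A :: "complex mat"
  assumes A: "A \<in> carrier_mat n n" and u: "u \<in> carrier_vec n" and i: "i < n"
    and mu: "spectral_radius A < mu"
  shows "\<exists>C. \<forall>k. norm ((A ^\<^sub>m k *\<^sub>v u) $ i) \<le> mu ^ k * C"
proof -
  have "0 < mu" using spectral_radius_nonneg[OF A] i mu by simp
  define B where "B = complex_of_real (inverse mu) \<cdot>\<^sub>m A"
  have B: "B \<in> carrier_mat n n" using A unfolding B_def by simp
  have "spectral_radius B \<le> inverse mu * spectral_radius A"
    unfolding B_def using spectral_radius_smult_le[OF A, of "complex_of_real (inverse mu)"] i \<open>0 < mu\<close>
    by (simp add: norm_inverse)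
  also have "\<dots> < 1" using mu \<open>0 < mu\<close> by (simp add: field_simps)
  finally obtain c where c: "\<And>k. norm_bound (B ^\<^sub>m k) c"
    using spectral_radius_jnf_norm_bound_less_1_upper_triangular[OF B] by auto
  have "norm ((A ^\<^sub>m k *\<^sub>v u) $ i) \<le> mu ^ k * (c * (\<Sum>j<n. norm (u $ j)))" for k
  proof -
    have "A = complex_of_real mu \<cdot>\<^sub>m B"
      unfolding B_def using \<open>0 < mu\<close> by (simp add: smult_smult_mat smult_one_mat)
    then have "A ^\<^sub>m k *\<^sub>v u = complex_of_real mu ^ k \<cdot>\<^sub>v (B ^\<^sub>m k *\<^sub>v u)"
      using B u by (simp add: pow_mat_smult smult_mat_mult_vec)
    then have "norm ((A ^\<^sub>m k *\<^sub>v u) $ i) = mu ^ k * norm ((B ^\<^sub>m k *\<^sub>v u) $ i)"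
      using B u i \<open>0 < mu\<close> by (simp add: norm_mult norm_power)
    also have "\<dots> \<le> mu ^ k * (c * (\<Sum>j<n. norm (u $ j)))"
      using norm_index_mult_mat_vec_le[OF c[of k] _ u i] B \<open>0 < mu\<close>
      by (intro mult_left_mono) auto
    finally show ?thesis .
  qed
  then show ?thesis by blast
qed

lemma spectral_radius_ge_of_growth:
  fixes A :: "complex mat"
  assumes A: "A \<in> carrier_mat n n" and u: "u \<in> carrier_vec n" and i: "i < n"
    and lam: "lam > 0" and w: "w > 0"
    and grow: "\<And>k. lam ^ k * w \<le> norm ((A ^\<^sub>m k *\<^sub>v u) $ i)"
  shows "lam \<le> spectral_radius A"
proof (rule ccontr)
  assume "\<not> lam \<le> spectral_radius A"
  then obtain mu where mu: "spectral_radius A < mu" "mu < lam"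
    using dense[of "spectral_radius A" lam] by auto
  then have "0 < mu" using spectral_radius_nonneg[OF A] i by simp
  obtain C where C: "\<And>k. norm ((A ^\<^sub>m k *\<^sub>v u) $ i) \<le> mu ^ k * C"
    using bounded_growth_if_spectral_radius_less[OF A u i mu(1)] by blast
  have "(lam / mu) ^ k \<le> C / w" for k
    using order_trans[OF grow C, of k] \<open>0 < mu\<close> w by (simp add: power_divide field_simps)
  moreover obtain k where "C / w < (lam / mu) ^ k"
    using real_arch_pow[of "lam / mu" "C / w"] mu \<open>0 < mu\<close> by auto
  ultimately show False by (metis not_le)
qed

text \<open>For a matrix with nonnegative entries this is just \<open>A w \<ge> g w\<close>; stated on the whole cone
  \<open>{u. Re u \<ge> t w}\<close> it is closed under products.\<close>
definition expands :: "complex mat \<Rightarrow> nat \<Rightarrow> (nat \<Rightarrow> real) \<Rightarrow> real \<Rightarrow> bool" where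
  "expands A n w g \<longleftrightarrow> A \<in> carrier_mat n n \<and>
     (\<forall>u \<in> carrier_vec n. \<forall>t \<ge> 0. (\<forall>r<n. t * w r \<le> Re (u $ r)) \<longrightarrow>
        (\<forall>r<n. t * g * w r \<le> Re ((A *\<^sub>v u) $ r)))"

lemma expands_carrier: "expands A n w g \<Longrightarrow> A \<in> carrier_mat n n"
  unfolding expands_def by simp

lemma expandsD:
  assumes "expands A n w g" "u \<in> carrier_vec n" "t \<ge> 0" "\<And>l. l < n \<Longrightarrow> t * w l \<le> Re (u $ l)"
    and "r < n"
  shows "t * g * w r \<le> Re ((A *\<^sub>v u) $ r)"
  using assms unfolding expands_def by blast

lemma expands_one: "expands (1\<^sub>m n) n w 1"
  unfolding expands_def by auto

lemma expands_mult:
  assumes A: "expands A n w g" and B: "expands B n w h" and "g \<ge> 0" "h \<ge> 0"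
  shows "expands (A * B) n w (h * g)"
  unfolding expands_def
proof (intro conjI ballI allI impI)
  have Ac: "A \<in> carrier_mat n n" and Bc: "B \<in> carrier_mat n n"
    using A B by (simp_all add: expands_carrier)
  then show "A * B \<in> carrier_mat n n" by simp
  fix u :: "complex vec" and t :: real and r
  assume u: "u \<in> carrier_vec n" and "0 \<le> t" and "\<forall>l<n. t * w l \<le> Re (u $ l)" and r: "r < n"
  then have "t * h * g * w r \<le> Re ((A *\<^sub>v (B *\<^sub>v u)) $ r)"
    using Bc \<open>h \<ge> 0\<close> by (intro expandsD[OF A] expandsD[OF B]) auto
  then show "t * (h * g) * w r \<le> Re ((A * B *\<^sub>v u) $ r)"
    using Ac Bc u r by (simp add: mult.assoc)
qed

lemma expands_pow:
  assumes A: "expands A n w g" and "g \<ge> 0"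
  shows "expands (A ^\<^sub>m k) n w (g ^ k)"
proof (induction k)
  case 0
  have "dim_row A = n" using expands_carrier[OF A] by simp
  then show ?case using expands_one[of n w] by simp
next
  case (Suc k)
  from expands_mult[OF Suc A _ \<open>g \<ge> 0\<close>] show ?case
    using \<open>g \<ge> 0\<close> by (simp add: mult.commute)
qed

lemma spectral_radius_ge_if_expands:
  assumes A: "expands A n w g" and "g > 0" and i: "i < n" and "w i > 0"
  shows "g \<le> spectral_radius A"
proof -
  define u where "u = vec n (\<lambda>r. complex_of_real (w r))"
  have u: "u \<in> carrier_vec n" unfolding u_def by simp
  have "g ^ k * w i \<le> norm ((A ^\<^sub>m k *\<^sub>v u) $ i)" for k
  proof -
    have "1 * g ^ k * w i \<le> Re ((A ^\<^sub>m k *\<^sub>v u) $ i)"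
      using expands_pow[OF A] \<open>g > 0\<close> u i by (intro expandsD) (auto simp: u_def)
    then show ?thesis using complex_Re_le_cmod order_trans by fastforce
  qed
  then show ?thesis
    using spectral_radius_ge_of_growth[OF expands_carrier[OF A] u i] assms by simp
qed

lemma expandsI:
  fixes E :: "nat \<Rightarrow> nat \<Rightarrow> real"
  assumes A: "A \<in> carrier_mat n n"
    and entries: "\<And>r l. r < n \<Longrightarrow> l < n \<Longrightarrow> A $$ (r, l) = complex_of_real (E r l)"
    and nonneg: "\<And>r l. r < n \<Longrightarrow> l < n \<Longrightarrow> E r l \<ge> 0"
    and super: "\<And>r. r < n \<Longrightarrow> g * w r \<le> (\<Sum>l<n. E r l * w l)"
  shows "expands A n w g"
  unfolding expands_def
proof (intro conjI ballI allI impI)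
  show "A \<in> carrier_mat n n" by (rule A)
  fix u :: "complex vec" and t :: real and r
  assume u: "u \<in> carrier_vec n" and t: "0 \<le> t" and dom: "\<forall>l<n. t * w l \<le> Re (u $ l)"
    and r: "r < n"
  have "t * (g * w r) \<le> (\<Sum>l<n. E r l * (t * w l))"
    using mult_left_mono[OF super[OF r] t] by (simp add: sum_distrib_left ac_simps)
  also have "\<dots> \<le> (\<Sum>l<n. E r l * Re (u $ l))"
    using dom nonneg r by (intro sum_mono mult_left_mono) auto
  also have "\<dots> = Re ((A *\<^sub>v u) $ r)"
    using A u r entries by (subst index_mult_mat_vec_sum) (auto simp: Re_sum)
  finally show "t * g * w r \<le> Re ((A *\<^sub>v u) $ r)" by (simp add: mult.assoc)
qed

lemma eigenvalue_mat3_cases: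
  fixes A :: "'a :: field mat"
  assumes A: "A \<in> carrier_mat 3 3" and e: "eigenvalue A e"
    and zeros: "A $$ (1, 0) = 0" "A $$ (1, 2) = 0" "A $$ (0, 2) = 0" "A $$ (2, 0) = 0"
  shows "e = A $$ (0, 0) \<or> e = A $$ (1, 1) \<or> e = A $$ (2, 2)"
proof -
  obtain v where v: "v \<in> carrier_vec 3" "v \<noteq> 0\<^sub>v 3" "A *\<^sub>v v = e \<cdot>\<^sub>v v"
    using e A unfolding eigenvalue_def eigenvector_def by auto
  have row: "(\<Sum>l<3. A $$ (r, l) * v $ l) = e * v $ r" if "r < 3" for r
    using arg_cong[OF v(3), of "\<lambda>x. x $ r"] v(1) A that by (subst (asm) index_mult_mat_vec_sum) auto
  have sum3: "(\<Sum>l<3. f l) = f 0 + f 1 + f 2" for f :: "nat \<Rightarrow> 'a"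
    by (simp add: numeral_3_eq_3 numeral_2_eq_2)
  have r0: "A $$ (0, 0) * v $ 0 + A $$ (0, 1) * v $ 1 = e * v $ 0"
    using row[of 0] zeros by (simp add: sum3)
  have r1: "A $$ (1, 1) * v $ 1 = e * v $ 1"
    using row[of 1] zeros by (simp add: sum3)
  have r2: "A $$ (2, 1) * v $ 1 + A $$ (2, 2) * v $ 2 = e * v $ 2"
    using row[of 2] zeros by (simp add: sum3)
  have "v $ 0 \<noteq> 0 \<or> v $ 1 \<noteq> 0 \<or> v $ 2 \<noteq> 0"
  proof (rule ccontr)
    assume "\<not> ?thesis"
    then have "v = 0\<^sub>v 3"
      using v(1) by (intro eq_vecI) (auto simp: numeral_3_eq_3 numeral_2_eq_2 less_Suc_eq)
    with v(2) show False by simp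
  qed
  then show ?thesis
    using r0 r1 r2 by (cases "v $ 1 = 0") auto
qed

lemma ex_greater_lower_bound_finite:
  fixes f :: "'a \<Rightarrow> real"
  assumes "finite S" "\<And>x. x \<in> S \<Longrightarrow> c < f x"
  shows "\<exists>g > c. \<forall>x \<in> S. g \<le> f x"
proof (cases "S = {}")
  case True
  then show ?thesis by (intro exI[of _ "c + 1"]) auto
next
  case False
  then show ?thesis
    using assms by (intro exI[of _ "Min (f ` S)"]) auto
qed

lemma le_root_if_pow_le:
  fixes g r :: real
  assumes "g > 0" "n > 0" "g ^ n \<le> r"
  shows "g \<le> r powr (1 / real n)"
proof -
  have "g = (g ^ n) powr (1 / real n)"
    using assms by (simp add: powr_realpow[symmetric] powr_powr)
  also have "\<dots> \<le> r powr (1 / real n)"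
    using assms by (intro powr_mono2) auto
  finally show ?thesis .
qed

lemma two_columns_in_range:
  fixes a d m s :: int
  assumes d: "d \<ge> 2" and m: "2 * d - 1 \<le> m" and a: "a \<ge> 2" and s: "- a \<le> s" "s \<le> a + m"
  shows "\<exists>L1 L2. L1 \<noteq> L2 \<and> L1 \<in> {-a..a} \<and> L2 \<in> {-a..a} \<and>
    s - L1 * d \<in> {0..m} \<and> s - L2 * d \<in> {0..m}"
proof -
  define q where "q = s div d"
  have "s = q * d + s mod d" "0 \<le> s mod d" "s mod d < d"
    using d unfolding q_def by simp_all
  then have q: "q * d \<le> s" "s < q * d + d" by linarith+
  have ad: "a * d - a \<ge> d" "a \<le> a * d"
    using mult_right_mono[of 2 a "d - 1"] a d by (auto simp: algebra_simps)
  consider "a < q" | "q \<le> - a" | "- a < q" "q \<le> a" by linarith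
  then show ?thesis
  proof cases
    case 1
    then have "(a + 1) * d \<le> q * d" using d by (intro mult_right_mono) auto
    then show ?thesis
      using q s ad a by (intro exI[of _ a] exI[of _ "a - 1"]) (auto simp: algebra_simps)
  next
    case 2
    then have "q * d \<le> - a * d" using d by (intro mult_right_mono) auto
    then show ?thesis
      using q s ad a m by (intro exI[of _ "- a"] exI[of _ "1 - a"]) (auto simp: algebra_simps)
  next
    case 3
    then show ?thesis
      using q m by (intro exI[of _ q] exI[of _ "q - 1"]) (auto simp: algebra_simps)
  qed
qed

lemma carrier_Mi: "Mi d m p j \<in> carrier_mat (2 * aconst d m + 1) (2 * aconst d m + 1)"
  unfolding Mi_def Let_def by auto

lemma index_Mi:
  assumes "r < 2 * aconst d m + 1" "l < 2 * aconst d m + 1"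
  shows "Mi d m p j $$ (r, l) =
    complex_of_real (pext m p (int r - int (aconst d m) + int j - (int l - int (aconst d m)) * int d))"
  using assms unfolding Mi_def Let_def by auto

lemma Mword_singleton: "Mword d m p [j] = Mi d m p j"
  using carrier_Mi[of d m p j] by simp

lemma expands_Mword:
  assumes "\<And>j. j \<in> set s \<Longrightarrow> expands (Mi d m p j) (2 * aconst d m + 1) w g" and "g \<ge> 0"
  shows "expands (Mword d m p s) (2 * aconst d m + 1) w (g ^ length s)"
  using assms(1)
proof (induction s)
  case Nil
  show ?case using expands_one by simp
next
  case (Cons j s)
  then show ?case
    using expands_mult[of "Mword d m p s" _ w "g ^ length s" "Mi d m p j" g] \<open>g \<ge> 0\<close> by simp
qed

lemma aconst_eq_1: "d \<ge> 2 \<Longrightarrow> m \<le> 2 * d - 2 \<Longrightarrow> aconst d m = 1"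
  unfolding aconst_def by simp

lemma aconst_ge_2: "d \<ge> 2 \<Longrightarrow> 2 * d - 1 \<le> m \<Longrightarrow> aconst d m \<ge> 2"
  unfolding aconst_def by (simp add: div_greater_zero_iff Suc_le_eq)

definition root_radii :: "nat \<Rightarrow> nat \<Rightarrow> (nat \<Rightarrow> real) \<Rightarrow> real set" where
  "root_radii d m p = {spectral_radius (Mword d m p \<sigma>) powr (1 / real (length \<sigma>)) | \<sigma>.
     \<sigma> \<noteq> [] \<and> set \<sigma> \<subseteq> {0..m} \<and> hd \<sigma> \<notin> {0, m}}"

lemma alpha_star_root_radii: "alpha_star d m p = (- 1 / ln (real d)) * ln (Inf (root_radii d m p))"
  unfolding alpha_star_def root_radii_def ..

locale regular_weights =
  fixes d m :: nat and p :: "nat \<Rightarrow> real"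
  assumes d_ge_3: "d \<ge> 3" and d_le_m: "d \<le> m"
    and p_pos: "\<And>i. i \<le> m \<Longrightarrow> p i > 0"
    and p0_le_pm: "p 0 \<le> p m"
    and pm_le_p: "\<And>i. 1 \<le> i \<Longrightarrow> i \<le> m - 1 \<Longrightarrow> p m \<le> p i"
begin

abbreviation N :: nat where
  "N \<equiv> 2 * aconst d m + 1"

abbreviation entry :: "nat \<Rightarrow> nat \<Rightarrow> nat \<Rightarrow> real" where
  "entry j r l \<equiv> pext m p (int r - int (aconst d m) + int j - (int l - int (aconst d m)) * int d)"

lemma p0_pos: "p 0 > 0"
  using p_pos[of 0] by simp

lemma p0_le_p:
  assumes "i \<le> m"
  shows "p 0 \<le> p i"
proof (cases "i = 0 \<or> i = m")
  case False
  then have "p m \<le> p i" using assms by (intro pm_le_p) auto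
  then show ?thesis using p0_le_pm by simp
qed (use p0_le_pm in auto)

lemma pext_nonneg: "pext m p e \<ge> 0"
  using p_pos[of "nat e"] unfolding pext_def by (auto simp: nat_le_iff less_imp_le)

lemma pext_pos: "0 \<le> e \<Longrightarrow> e \<le> int m \<Longrightarrow> pext m p e > 0"
  using p_pos[of "nat e"] unfolding pext_def by (simp add: nat_le_iff)

lemma p0_le_pext: "0 \<le> e \<Longrightarrow> e \<le> int m \<Longrightarrow> p 0 \<le> pext m p e"
  using p0_le_p[of "nat e"] unfolding pext_def by (simp add: nat_le_iff)

lemma expands_MiI:
  assumes "\<And>r. r < N \<Longrightarrow> g * w r \<le> (\<Sum>l<N. entry j r l * w l)"
  shows "expands (Mi d m p j) N w g"
  using carrier_Mi index_Mi pext_nonneg assms by (rule expandsI)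

lemma spectral_radius_Mword_ge:
  assumes "\<And>j. j \<le> m \<Longrightarrow> expands (Mi d m p j) N w g" and "g > 0" "i < N" "w i > 0"
    and "set s \<subseteq> {0..m}"
  shows "g ^ length s \<le> spectral_radius (Mword d m p s)"
proof -
  have "expands (Mword d m p s) N w (g ^ length s)"
    using assms(1,2,5) by (intro expands_Mword) auto
  from spectral_radius_ge_if_expands[OF this _ assms(3,4)] show ?thesis
    using assms(2) by simp
qed

lemma spectral_radius_Mword_ge_p0:
  assumes "set s \<subseteq> {0..m}"
  shows "p 0 ^ length s \<le> spectral_radius (Mword d m p s)"
proof -
  define w where "w = (\<lambda>r. if r = aconst d m then 1 else (0::real))"
  have "expands (Mi d m p j) N w (p 0)" if j: "j \<le> m" for j
  proof (rule expands_MiI)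
    fix r assume "r < N"
    have "(\<Sum>l<N. entry j r l * w l) = (\<Sum>l<N. if l = aconst d m then entry j r l else 0)"
      unfolding w_def by (intro sum.cong) auto
    also have "\<dots> = entry j r (aconst d m)" by (subst sum.delta) auto
    finally show "p 0 * w r \<le> (\<Sum>l<N. entry j r l * w l)"
      using p0_le_pext[of "int j"] j pext_nonneg unfolding w_def by auto
  qed
  then show ?thesis
    using assms p0_pos by (intro spectral_radius_Mword_ge[of w _ "aconst d m"]) (auto simp: w_def)
qed

lemma expands_Mi_2p0:
  assumes m: "2 * d - 1 \<le> m" and j: "j \<le> m"
  shows "expands (Mi d m p j) N (\<lambda>_. 1) (2 * p 0)"
proof (rule expands_MiI)
  fix r assume r: "r < N"
  let ?a = "int (aconst d m)"
  define s where "s = int r - ?a + int j"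
  have "2 * int d - 1 \<le> int m" "2 \<le> ?a" "- ?a \<le> s" "s \<le> ?a + int m"
    using m d_ge_3 aconst_ge_2[of d m] r j unfolding s_def by auto
  from two_columns_in_range[OF _ this] d_ge_3 obtain L1 L2 where L: "L1 \<noteq> L2"
    "L1 \<in> {-?a..?a}" "L2 \<in> {-?a..?a}" "s - L1 * int d \<in> {0..int m}" "s - L2 * int d \<in> {0..int m}"
    by auto
  define l1 l2 where "l1 = nat (L1 + ?a)" and "l2 = nat (L2 + ?a)"
  have l: "l1 \<noteq> l2" "l1 < N" "l2 < N" "int l1 - ?a = L1" "int l2 - ?a = L2"
    unfolding l1_def l2_def using L by auto
  have "p 0 \<le> entry j r l1" "p 0 \<le> entry j r l2"
    using p0_le_pext L(4,5) unfolding l(4,5) s_def by auto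
  then have "2 * p 0 \<le> entry j r l1 + entry j r l2" by simp
  also have "\<dots> = (\<Sum>l\<in>{l1, l2}. entry j r l)" using l(1) by simp
  also have "\<dots> \<le> (\<Sum>l<N. entry j r l)"
    using l pext_nonneg by (intro sum_mono2) auto
  finally show "2 * p 0 * 1 \<le> (\<Sum>l<N. entry j r l * 1)" by simp
qed

lemma p0_less_pext_middle:
  assumes nc: "\<forall>i \<in> {m - d + 1 .. d - 1}. p 0 \<noteq> p i"
    and y: "int m - int d + 1 \<le> y" "y \<le> int d - 1"
  shows "p 0 < pext m p y"
proof -
  have y': "0 \<le> y" "y \<le> int m" "nat y \<in> {m - d + 1 .. d - 1}"
    using y d_le_m by auto
  then have "p 0 \<noteq> pext m p y" using nc by (simp add: pext_def)
  with p0_le_pext[OF y'(1,2)] show ?thesis by simp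
qed

lemma p0_less_tent_sum:
  assumes m: "m \<le> 2 * d - 2" and nc: "\<forall>i \<in> {m - d + 1 .. d - 1}. p 0 \<noteq> p i"
  shows "0 \<le> x \<Longrightarrow> x \<le> int m \<Longrightarrow>
      2 * p 0 < pext m p (x + int d) + 2 * pext m p x + pext m p (x - int d)"
    and "x = -1 \<or> x = int m + 1 \<Longrightarrow>
      p 0 < pext m p (x + int d) + 2 * pext m p x + pext m p (x - int d)"
proof -
  note nonneg = pext_nonneg[of "x + int d"] pext_nonneg[of x] pext_nonneg[of "x - int d"]
  note mid = p0_less_pext_middle[OF nc]
  assume x: "0 \<le> x" "x \<le> int m"
  consider "x + int d \<le> int m" | "int d \<le> x" | "int m - int d + 1 \<le> x" "x \<le> int d - 1"
    by fastforce
  then have "0 < pext m p (x + int d) \<or> 0 < pext m p (x - int d) \<or> p 0 < pext m p x"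
    using pext_pos[of "x + int d"] pext_pos[of "x - int d"] mid[of x] x by cases auto
  then show "2 * p 0 < pext m p (x + int d) + 2 * pext m p x + pext m p (x - int d)"
    using p0_le_pext[OF x] nonneg by auto
next
  note nonneg = pext_nonneg[of "x + int d"] pext_nonneg[of x] pext_nonneg[of "x - int d"]
  note mid = p0_less_pext_middle[OF nc]
  assume "x = -1 \<or> x = int m + 1"
  then have "p 0 < pext m p (x + int d) \<or> p 0 < pext m p (x - int d)"
    using mid[of "x + int d"] mid[of "x - int d"] m d_ge_3 by force
  then show "p 0 < pext m p (x + int d) + 2 * pext m p x + pext m p (x - int d)"
    using nonneg by auto
qed

text \<open>For \<open>a = 1\<close>, doubling the weight of the central coordinate leaves a strict margin in the
  outer rows; the central row needs \<open>p\<^sub>j > p\<^sub>0\<close> for the \<open>j\<close> with \<open>M\<^sub>j(0, l) = 0\<close> for \<open>l \<noteq> 0\<close>.\<close>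
lemma Mi_weighted_row_gt:
  assumes m: "m \<le> 2 * d - 2" and nc: "\<forall>i \<in> {m - d + 1 .. d - 1}. p 0 \<noteq> p i"
    and j: "j \<le> m" and r: "r < 3"
  shows "p 0 * (if r = 1 then 2 else 1) < (\<Sum>l<3. entry j r l * (if l = 1 then 2 else 1))"
proof -
  have a: "aconst d m = 1" using aconst_eq_1 d_ge_3 m by simp
  define x where "x = int r - 1 + int j"
  have row: "(\<Sum>l<3. entry j r l * (if l = 1 then 2 else 1)) =
      pext m p (x + int d) + 2 * pext m p x + pext m p (x - int d)"
    unfolding a x_def by (simp add: numeral_3_eq_3 algebra_simps)
  show ?thesis
  proof (cases "0 \<le> x \<and> x \<le> int m")
    case True
    then show ?thesis
      using p0_less_tent_sum(1)[OF m nc, of x] p0_pos unfolding row by auto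
  next
    case False
    then have "r \<noteq> 1" "x = -1 \<or> x = int m + 1" using r j unfolding x_def by auto
    then show ?thesis
      using p0_less_tent_sum(2)[OF m nc, of x] unfolding row by auto
  qed
qed

lemma ex_expands_Mi_gt_p0:
  assumes m: "m \<le> 2 * d - 2" and nc: "\<forall>i \<in> {m - d + 1 .. d - 1}. p 0 \<noteq> p i"
  shows "\<exists>g > p 0. \<forall>j \<le> m. expands (Mi d m p j) N (\<lambda>l. if l = 1 then 2 else 1) g"
proof -
  let ?w = "\<lambda>l. if l = 1 then 2 else 1 :: real"
  have N: "N = 3" using aconst_eq_1 d_ge_3 m by simp
  define ratio where "ratio = (\<lambda>(j, r). (\<Sum>l<3. entry j r l * ?w l) / ?w r)"
  have "p 0 < ratio (j, r)" if "(j, r) \<in> {..m} \<times> {..<3}" for j r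
    using Mi_weighted_row_gt[OF m nc, of j r] that by (simp add: ratio_def pos_less_divide_eq)
  then obtain g where g: "g > p 0" "\<And>j r. j \<le> m \<Longrightarrow> r < 3 \<Longrightarrow> g \<le> ratio (j, r)"
    using ex_greater_lower_bound_finite[of "{..m} \<times> {..<3}" "p 0" ratio] by force
  have "expands (Mi d m p j) N ?w g" if "j \<le> m" for j
  proof (rule expands_MiI)
    fix r assume "r < N"
    then have "g \<le> ratio (j, r)" using g(2) that N by simp
    then show "g * ?w r \<le> (\<Sum>l<N. entry j r l * ?w l)"
      unfolding N ratio_def by (simp add: pos_le_divide_eq)
  qed
  then show ?thesis using g(1) by blast
qed

lemma spectral_radius_Mi_le_p0:
  assumes m: "m \<le> 2 * d - 2" and i: "i \<in> {m - d + 1 .. d - 1}" and pi: "p 0 = p i"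
  shows "spectral_radius (Mi d m p i) \<le> p 0"
proof -
  let ?A = "Mi d m p i"
  have a: "aconst d m = 1" using aconst_eq_1 d_ge_3 m by simp
  have A: "?A \<in> carrier_mat 3 3" using carrier_Mi[of d m p i] unfolding a by simp
  have entry: "?A $$ (r, l) = complex_of_real (pext m p (int r - 1 + int i - (int l - 1) * int d))"
    if "r < 3" "l < 3" for r l
    using index_Mi[of r d m l p i] that unfolding a by simp
  have i_bounds: "1 \<le> i" "i \<le> m - 1" "m \<le> i + d - 1" "i + 1 \<le> d" using i d_le_m m d_ge_3 by auto
  have zeros: "?A $$ (1, 0) = 0" "?A $$ (1, 2) = 0" "?A $$ (0, 2) = 0" "?A $$ (2, 0) = 0"
    using entry[of 1 0] entry[of 1 2] entry[of 0 2] entry[of 2 0] i_bounds by (simp_all add: pext_def)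
  have "?A $$ (1, 1) = p 0" using entry[of 1 1] i_bounds pi by (simp add: pext_def)
  moreover have "pext m p (int i - 1 + int d) \<le> p 0"
  proof (cases "i + d - 1 = m")
    case True
    then have "int i - 1 + int d = int m" using i_bounds by linarith
    then show ?thesis using pm_le_p[of i] i_bounds pi by (simp add: pext_def)
  next
    case False
    then have "int m < int i - 1 + int d" using i_bounds by linarith
    then show ?thesis using p0_pos by (simp add: pext_def)
  qed
  then have "norm (?A $$ (0, 0)) \<le> p 0"
    using entry[of 0 0] pext_nonneg by (simp add: algebra_simps)
  moreover have "pext m p (int i + 1 - int d) \<le> p 0"
    using i_bounds p0_pos by (cases "i + 1 = d") (auto simp: pext_def)
  then have "norm (?A $$ (2, 2)) \<le> p 0"
    using entry[of 2 2] pext_nonneg by (simp add: algebra_simps)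
  ultimately have "norm e \<le> p 0" if "eigenvalue ?A e" for e
    using eigenvalue_mat3_cases[OF A that zeros] p0_pos by auto
  then show ?thesis
    using spectral_radius_mem_max(1)[OF A] unfolding spectrum_def by auto
qed

lemma ex_growth_gt_p0:
  assumes "\<not> (m \<le> 2 * d - 2 \<and> (\<exists>i \<in> {m - d + 1 .. d - 1}. p 0 = p i))"
  shows "\<exists>g > p 0. \<forall>s. set s \<subseteq> {0..m} \<longrightarrow> g ^ length s \<le> spectral_radius (Mword d m p s)"
proof (cases "m \<le> 2 * d - 2")
  case False
  then have "(2 * p 0) ^ length s \<le> spectral_radius (Mword d m p s)" if "set s \<subseteq> {0..m}" for s
    using that p0_pos expands_Mi_2p0 by (intro spectral_radius_Mword_ge[of "\<lambda>_. 1" _ 0]) auto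
  then show ?thesis using p0_pos by (intro exI[of _ "2 * p 0"]) auto
next
  case True
  then obtain g where g: "g > p 0"
    and "\<forall>j \<le> m. expands (Mi d m p j) N (\<lambda>l. if l = 1 then 2 else 1) g"
    using ex_expands_Mi_gt_p0 assms by auto
  then have "g ^ length s \<le> spectral_radius (Mword d m p s)" if "set s \<subseteq> {0..m}" for s
    using that p0_pos
    by (intro spectral_radius_Mword_ge[where i = 0 and w = "\<lambda>l. if l = 1 then 2 else 1"]) auto
  then show ?thesis using g by blast
qed

lemma Inf_root_radii_ge:
  assumes "g > 0" and growth: "\<And>s. set s \<subseteq> {0..m} \<Longrightarrow> g ^ length s \<le> spectral_radius (Mword d m p s)"
  shows "g \<le> Inf (root_radii d m p)"
proof (rule cInf_greatest)
  show "root_radii d m p \<noteq> {}"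
    unfolding root_radii_def using d_ge_3 d_le_m by (auto intro!: exI[of _ "[1]"])
  fix x assume "x \<in> root_radii d m p"
  then obtain s where "x = spectral_radius (Mword d m p s) powr (1 / real (length s))"
    and "s \<noteq> []" "set s \<subseteq> {0..m}" unfolding root_radii_def by auto
  then show "g \<le> x" using growth \<open>g > 0\<close> by (auto intro: le_root_if_pow_le)
qed

lemma Inf_root_radii_le:
  assumes "\<sigma> \<noteq> []" "set \<sigma> \<subseteq> {0..m}" "hd \<sigma> \<notin> {0, m}"
  shows "Inf (root_radii d m p) \<le> spectral_radius (Mword d m p \<sigma>) powr (1 / real (length \<sigma>))"
proof (rule cInf_lower)
  show "bdd_below (root_radii d m p)"
    unfolding root_radii_def by (rule bdd_belowI[of _ 0]) auto
qed (use assms in \<open>auto simp: root_radii_def\<close>)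

lemma p0_le_Inf_root_radii: "p 0 \<le> Inf (root_radii d m p)"
  using Inf_root_radii_ge[OF p0_pos spectral_radius_Mword_ge_p0] .

lemma Inf_root_radii_le_p0:
  assumes m: "m \<le> 2 * d - 2" and i: "i \<in> {m - d + 1 .. d - 1}" and "p 0 = p i"
  shows "Inf (root_radii d m p) \<le> p 0"
proof -
  have "0 \<le> spectral_radius (Mi d m p i)"
    using spectral_radius_nonneg[OF carrier_Mi] by simp
  have "Inf (root_radii d m p) \<le> spectral_radius (Mword d m p [i]) powr (1 / real (length [i]))"
    using i d_le_m by (intro Inf_root_radii_le) auto
  also have "\<dots> = spectral_radius (Mi d m p i)"
    using \<open>0 \<le> spectral_radius (Mi d m p i)\<close> by (simp add: Mword_singleton del: Mword.simps)
  also have "\<dots> \<le> p 0" using spectral_radius_Mi_le_p0[OF m i \<open>p 0 = p i\<close>] .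
  finally show ?thesis .
qed

lemma Inf_root_radii_gt_p0:
  assumes "\<not> (m \<le> 2 * d - 2 \<and> (\<exists>i \<in> {m - d + 1 .. d - 1}. p 0 = p i))"
  shows "p 0 < Inf (root_radii d m p)"
proof -
  obtain g where "g > p 0"
    and "\<And>s. set s \<subseteq> {0..m} \<Longrightarrow> g ^ length s \<le> spectral_radius (Mword d m p s)"
    using ex_growth_gt_p0[OF assms] by blast
  then have "g \<le> Inf (root_radii d m p)" using p0_pos by (intro Inf_root_radii_ge) auto
  then show ?thesis using \<open>g > p 0\<close> by simp
qed

lemma Inf_root_radii_eq_p0_iff:
  "Inf (root_radii d m p) = p 0 \<longleftrightarrow> m \<le> 2 * d - 2 \<and> (\<exists>i \<in> {m - d + 1 .. d - 1}. p 0 = p i)"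
  using Inf_root_radii_le_p0 Inf_root_radii_gt_p0 p0_le_Inf_root_radii by force

lemma alpha_star_eq_alpha_bar_iff: "alpha_star d m p = alpha_bar d p \<longleftrightarrow> Inf (root_radii d m p) = p 0"
proof -
  have "ln (Inf (root_radii d m p)) = ln (p 0) \<longleftrightarrow> Inf (root_radii d m p) = p 0"
    using p0_pos p0_le_Inf_root_radii by (intro ln_inj_iff) auto
  then show ?thesis
    using d_ge_3 unfolding alpha_star_root_radii alpha_bar_def by simp
qed

end

theorem proposition17:
  fixes d m :: nat and p :: "nat \<Rightarrow> real"
  assumes "d \<ge> 3" and "m \<ge> d"
    and "\<And>i. i \<le> m \<Longrightarrow> p i > 0"
    and "(\<Sum>i\<le>m. p i) = 1"
    and "p 0 \<le> p m"
    and "\<And>i. 1 \<le> i \<Longrightarrow> i \<le> m - 1 \<Longrightarrow> p m \<le> p i"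
  shows "alpha_star d m p = alpha_bar d p \<longleftrightarrow>
           (m \<le> 2 * d - 2 \<and> (\<exists>i \<in> {m - d + 1 .. d - 1}. p 0 = p i))"
proof -
  interpret regular_weights d m p
    using assms by unfold_locales
  show ?thesis
    unfolding alpha_star_eq_alpha_bar_iff Inf_root_radii_eq_p0_iff ..
qed

end
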